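(* Let $X\sim\mathrm{ECR}(\beta,\lambda)$ and $r\in(-2\beta,1)$. Then $\mathbb E(X^r)$ is finite and $$\mathbb E(X^r)=\beta(\lambda\sqrt2)^r\,B\!\left(1-r,\tfrac r2+\beta\right)\,{}_2F_1\!\left(-\tfrac r2,\tfrac r2+\beta;\,1-\tfrac r2+\beta;\,\tfrac12\right).$$
   Context: The exponentiated Cauchy–Rayleigh distribution $\mathrm{ECR}(\beta,\lambda)$, with shape parameter $\beta>0$ and scale parameter $\lambda>0$, is the distribution on $(0,\infty)$ with cdf $F(x)=\left(1-\frac{\lambda}{\sqrt{\lambda^2+x^2}}\right)^{\beta}$ for $x>0$. $B(\cdot,\cdot)$ is the beta function and ${}_2F_1(a,b;c;z)=\sum_{k\ge0}\frac{(a)_k(b)_k}{(c)_k}\frac{z^k}{k!}$ is the Gauss hypergeometric function, with $(a)_k=\Gamma(a+k)/\Gamma(a)$. *)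

theory Defs
  imports "HOL-Probability.Probability"
begin

definition ECR_cdf :: "real \<Rightarrow> real \<Rightarrow> real \<Rightarrow> real" where
  "ECR_cdf \<beta> l x = (if x > 0 then (1 - l / sqrt (l\<^sup>2 + x\<^sup>2)) powr \<beta> else 0)"

definition hyp2F1 :: "real \<Rightarrow> real \<Rightarrow> real \<Rightarrow> real \<Rightarrow> real" where
  "hyp2F1 a b c z = (\<Sum>k. pochhammer a k * pochhammer b k / pochhammer c k * z ^ k / fact k)"

end

theory Submission
  imports Defs
begin

text \<open>If V has cdf v powr \<beta> on [0,1] and q inverts x \<mapsto> 1 - l / sqrt (l^2 + x^2), then q V
  has the ECR(\<beta>, l) cdf, so E(X powr r) is the integral of \<beta> v powr (\<beta> - 1) q(v) powr r over (0,1).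
  Since q(v) powr r = (l sqrt 2) powr r v powr (r/2) (1 - v) powr (-r) (1 - v/2) powr (r/2),
  this is Euler's integral representation of the hypergeometric function at z = 1/2. That
  representation follows by expanding (1 - z t) powr (-a) into its binomial series and integrating
  termwise against the Beta weight; this is legitimate since the k-th term integrates to its
  coefficient times Beta (b + k) (c - b) \<le> Beta b (c - b), and the coefficients are absolutely
  summable for \<bar>z\<bar> < 1.\<close>

lemma pochhammer_binomial_series:
  fixes a z :: real
  assumes "\<bar>z\<bar> < 1"
  shows "(\<lambda>k. pochhammer a k / fact k * z ^ k) sums (1 - z) powr (- a)"
proof -
  have "(\<lambda>k. (- a gchoose k) * (- z) ^ k) sums (1 + - z) powr (- a)"
    by (rule gen_binomial_real) (use assms in simp)
  moreover have "(- a gchoose k) * (- z) ^ k = pochhammer a k / fact k * z ^ k" for k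
  proof -
    have "(- a gchoose k) * (- z) ^ k = ((-1) ^ k * (-1) ^ k) * pochhammer a k / fact k * z ^ k"
      by (simp add: gbinomial_pochhammer power_minus[of z])
    also have "(-1 :: real) ^ k * (-1) ^ k = 1"
      by (simp flip: power_add)
    finally show ?thesis by simp
  qed
  ultimately show ?thesis by simp
qed

lemma summable_norm_pochhammer_binomial_series:
  fixes a z :: real
  assumes "\<bar>z\<bar> < 1"
  shows "summable (\<lambda>k. norm (pochhammer a k / fact k * z ^ k))"
proof -
  define w where "w = (\<bar>z\<bar> + 1) / 2"
  have w: "\<bar>w\<bar> < 1" "\<bar>z\<bar> < \<bar>w\<bar>"
    using assms by (auto simp: w_def)
  have "summable (\<lambda>k. pochhammer a k / fact k * w ^ k)"
    using pochhammer_binomial_series[OF w(1)] by (simp add: sums_iff)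
  from powser_insidea[OF this, of z] w show ?thesis by simp
qed

lemma Beta_plus_of_nat:
  fixes a b :: real
  assumes "a > 0" "b > 0"
  shows "Beta (a + real k) b = Beta a b * pochhammer a k / pochhammer (a + b) k"
proof -
  have "a \<notin> \<int>\<^sub>\<le>\<^sub>0" "a + b \<notin> \<int>\<^sub>\<le>\<^sub>0"
    using assms by (auto elim!: nonpos_Ints_cases)
  moreover have "Gamma a > 0" "Gamma (a + b) > 0" "pochhammer (a + b) k > 0"
    using assms by (simp_all add: Gamma_real_pos pochhammer_pos)
  ultimately have "Gamma (a + real k) = pochhammer a k * Gamma a"
    and "Gamma (a + b + real k) = pochhammer (a + b) k * Gamma (a + b)"
    by (simp_all add: pochhammer_Gamma)
  with \<open>Gamma (a + b) > 0\<close> \<open>pochhammer (a + b) k > 0\<close> show ?thesis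
    by (simp add: Beta_def algebra_simps)
qed

lemma Beta_real_pos:
  fixes a b :: real
  assumes "a > 0" "b > 0"
  shows "Beta a b > 0"
  using assms by (simp add: Beta_def Gamma_real_pos)

lemma set_integral_Beta:
  fixes a b :: real
  assumes "a > 0" "b > 0"
  shows "(LINT t:{0..1}|lborel. t powr (a - 1) * (1 - t) powr (b - 1)) = Beta a b"
  using set_borel_integral_eq_integral(2)[OF integrable_Beta[OF assms]]
    has_integral_Beta_real[OF assms] by (simp add: integral_unique)

lemma Beta_weighted_monomial:
  fixes b d :: real
  assumes "b > 0" "d > 0"
  shows "set_integrable lborel {0..1} (\<lambda>t. t powr (b - 1) * (1 - t) powr (d - 1) * t ^ k)"
    and "(LINT t:{0..1}|lborel. t powr (b - 1) * (1 - t) powr (d - 1) * t ^ k) = Beta (b + real k) d"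
proof -
  have shift: "t powr (b - 1) * (1 - t) powr (d - 1) * t ^ k
                 = t powr (b + real k - 1) * (1 - t) powr (d - 1)" if "t \<in> {0..1}" for t
  proof (cases "t = 0")
    case False
    with that have "t powr (b + real k - 1) = t powr (b - 1) * t ^ k"
      by (simp add: powr_add[symmetric] powr_realpow[symmetric] algebra_simps)
    then show ?thesis
      by simp
  qed simp
  show "set_integrable lborel {0..1} (\<lambda>t. t powr (b - 1) * (1 - t) powr (d - 1) * t ^ k)"
    using integrable_Beta[of "b + real k" d] assms shift by (subst set_integrable_cong) auto
  show "(LINT t:{0..1}|lborel. t powr (b - 1) * (1 - t) powr (d - 1) * t ^ k) = Beta (b + real k) d"
    using set_integral_Beta[of "b + real k" d] assms shift
    by (subst set_lebesgue_integral_cong) auto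
qed

lemma summable_norm_powser_le_one:
  fixes c :: "nat \<Rightarrow> real"
  assumes "summable (\<lambda>k. norm (c k))" "\<bar>t\<bar> \<le> 1"
  shows "summable (\<lambda>k. norm (c k * t ^ k))"
proof (rule summable_comparison_test'[OF assms(1)])
  fix k
  have "\<bar>t\<bar> ^ k \<le> 1"
    using assms(2) by (intro power_le_one) auto
  then show "norm (norm (c k * t ^ k)) \<le> norm (c k)"
    by (simp add: abs_mult power_abs mult_left_le)
qed

lemma Beta_weighted_powser_integral:
  fixes b d :: real and c :: "nat \<Rightarrow> real"
  assumes "b > 0" "d > 0" "summable (\<lambda>k. norm (c k))"
  shows "set_integrable lborel {0..1} (\<lambda>t. t powr (b - 1) * (1 - t) powr (d - 1) * (\<Sum>k. c k * t ^ k))"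
    and "(\<lambda>k. c k * Beta (b + real k) d) sums
           (LINT t:{0..1}|lborel. t powr (b - 1) * (1 - t) powr (d - 1) * (\<Sum>k. c k * t ^ k))"
proof -
  define w where "w t = indicator {0..1} t * (t powr (b - 1) * (1 - t) powr (d - 1))" for t :: real
  define f where "f k t = c k * (w t * t ^ k)" for k t
  note monomial = Beta_weighted_monomial[OF \<open>b > 0\<close> \<open>d > 0\<close>]
  have integrable_f: "integrable lborel (f k)" for k
    using monomial(1)[of k] unfolding f_def[abs_def] w_def set_integrable_def
    by (intro integrable_mult_right) (simp add: mult.assoc)
  have integral_f: "integral\<^sup>L lborel (f k) = c k * Beta (b + real k) d" for k
    using monomial(2)[of k] unfolding f_def[abs_def] w_def set_lebesgue_integral_def
    by (simp add: mult.assoc)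
  have "summable (\<lambda>k. \<integral>t. norm (f k t) \<partial>lborel)"
  proof (rule summable_comparison_test')
    show "summable (\<lambda>k. Beta b d * norm (c k))"
      using assms(3) by (rule summable_mult)
    fix k
    have "norm (f k t) = norm (c k) * (w t * t ^ k)" for t
      by (simp add: f_def w_def abs_mult indicator_def)
    then have "(\<integral>t. norm (f k t) \<partial>lborel) = norm (c k) * Beta (b + real k) d"
      using monomial(2)[of k] by (simp add: w_def set_lebesgue_integral_def mult.assoc)
    moreover have "0 \<le> Beta (b + real k) d"
      using assms by (simp add: Beta_real_pos less_imp_le)
    moreover have "Beta (b + real k) d \<le> Beta b d"
      using assms by (intro Beta_real_mono) auto
    ultimately show "norm (\<integral>t. norm (f k t) \<partial>lborel) \<le> Beta b d * norm (c k)"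
      by (simp add: mult.commute[of "Beta b d"] mult_left_mono)
  qed
  moreover have summable_at: "summable (\<lambda>k. norm (c k * t ^ k))" if "t \<in> {0..1}" for t
    using that by (intro summable_norm_powser_le_one assms(3)) auto
  then have "AE t in lborel. summable (\<lambda>k. norm (f k t))"
  proof (intro AE_I2)
    fix t :: real
    show "summable (\<lambda>k. norm (f k t))"
    proof (cases "t \<in> {0..1}")
      case True
      have "(\<lambda>k. norm (f k t)) = (\<lambda>k. norm (w t) * norm (c k * t ^ k))"
        by (simp add: f_def abs_mult mult.left_commute)
      with summable_mult[OF summable_at[OF True]] show ?thesis
        by simp
    qed (simp add: f_def w_def)
  qed
  moreover have "indicator {0..1} t * (t powr (b - 1) * (1 - t) powr (d - 1) * (\<Sum>k. c k * t ^ k))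
                   = (\<Sum>k. f k t)" for t
  proof (cases "t \<in> {0..1}")
    case True
    have "(\<Sum>k. f k t) = w t * (\<Sum>k. c k * t ^ k)"
      using suminf_mult[OF summable_norm_cancel[OF summable_at[OF True]], of "w t"]
      by (simp add: f_def ac_simps)
    with True show ?thesis
      by (simp add: w_def)
  qed (simp add: f_def w_def)
  ultimately show "set_integrable lborel {0..1}
      (\<lambda>t. t powr (b - 1) * (1 - t) powr (d - 1) * (\<Sum>k. c k * t ^ k))"
    and "(\<lambda>k. c k * Beta (b + real k) d) sums
      (LINT t:{0..1}|lborel. t powr (b - 1) * (1 - t) powr (d - 1) * (\<Sum>k. c k * t ^ k))"
    using integrable_suminf[OF integrable_f] sums_integral[OF integrable_f]
    by (simp_all add: set_integrable_def set_lebesgue_integral_def integral_f)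
qed

lemma hyp2F1_Euler_integral:
  fixes a b c z :: real
  assumes "0 < b" "b < c" "\<bar>z\<bar> < 1"
  shows "set_integrable lborel {0..1}
           (\<lambda>t. t powr (b - 1) * (1 - t) powr (c - b - 1) * (1 - z * t) powr (- a))"
    and "(LINT t:{0..1}|lborel. t powr (b - 1) * (1 - t) powr (c - b - 1) * (1 - z * t) powr (- a))
           = Beta b (c - b) * hyp2F1 a b c z"
proof -
  have "c - b > 0"
    using assms by simp
  define e where "e k = pochhammer a k / fact k * z ^ k" for k
  have "summable (\<lambda>k. norm (e k))"
    unfolding e_def using summable_norm_pochhammer_binomial_series[OF \<open>\<bar>z\<bar> < 1\<close>] .
  note powser = Beta_weighted_powser_integral[OF \<open>b > 0\<close> \<open>c - b > 0\<close> this]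
  have binomial: "(1 - z * t) powr (- a) = (\<Sum>k. e k * t ^ k)" if "t \<in> {0..1}" for t
  proof -
    have "\<bar>z * t\<bar> < 1"
      using that assms by (auto simp: abs_mult intro: le_less_trans[OF mult_left_le])
    from pochhammer_binomial_series[OF this, of a] show ?thesis
      by (simp add: sums_iff e_def power_mult_distrib mult.assoc)
  qed
  then show "set_integrable lborel {0..1}
      (\<lambda>t. t powr (b - 1) * (1 - t) powr (c - b - 1) * (1 - z * t) powr (- a))"
    using powser(1) by (subst set_integrable_cong) auto
  let ?I = "LINT t:{0..1}|lborel. t powr (b - 1) * (1 - t) powr (c - b - 1) * (1 - z * t) powr (- a)"
  have "?I = (LINT t:{0..1}|lborel. t powr (b - 1) * (1 - t) powr (c - b - 1) * (\<Sum>k. e k * t ^ k))"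
    using binomial by (intro set_lebesgue_integral_cong) auto
  moreover have "e k * Beta (b + real k) (c - b)
      = Beta b (c - b) * (pochhammer a k * pochhammer b k / pochhammer c k * z ^ k / fact k)" for k
    using assms by (simp add: Beta_plus_of_nat e_def ac_simps)
  ultimately have "(\<lambda>k. Beta b (c - b) * (pochhammer a k * pochhammer b k / pochhammer c k * z ^ k / fact k))
      sums ?I"
    using powser(2) by (simp only:)
  moreover have "Beta b (c - b) \<noteq> 0"
    using Beta_real_pos[OF \<open>b > 0\<close> \<open>c - b > 0\<close>] by simp
  ultimately have "hyp2F1 a b c z = ?I / Beta b (c - b)"
    unfolding hyp2F1_def by (rule sums_unique[symmetric, OF sums_mult_D])
  with \<open>Beta b (c - b) \<noteq> 0\<close> show "?I = Beta b (c - b) * hyp2F1 a b c z"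
    by simp
qed

text \<open>The inverse of x \<mapsto> 1 - l / sqrt (l^2 + x^2) on (0,1).\<close>

definition ECR_quantile :: "real \<Rightarrow> real \<Rightarrow> real" where
  "ECR_quantile l v = l * sqrt (v * (2 - v)) / (1 - v)"

lemma borel_measurable_ECR_quantile [measurable]: "ECR_quantile l \<in> borel_measurable borel"
  unfolding ECR_quantile_def by measurable

lemma ECR_quantile_pos:
  assumes "l > 0" "0 < v" "v < 1"
  shows "ECR_quantile l v > 0"
  using assms by (simp add: ECR_quantile_def)

lemma ECR_quantile_le_iff:
  fixes l v x :: real
  assumes "l > 0" "0 < v" "v < 1" "x > 0"
  shows "ECR_quantile l v \<le> x \<longleftrightarrow> v \<le> 1 - l / sqrt (l\<^sup>2 + x\<^sup>2)"
proof -
  have "0 \<le> v * (2 - v)" "0 < sqrt (l\<^sup>2 + x\<^sup>2)"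
    using assms by (simp_all add: add_pos_pos)
  have "ECR_quantile l v \<le> x \<longleftrightarrow> l * sqrt (v * (2 - v)) \<le> x * (1 - v)"
    using assms by (simp add: ECR_quantile_def divide_le_eq)
  also have "\<dots> \<longleftrightarrow> (l * sqrt (v * (2 - v)))\<^sup>2 \<le> (x * (1 - v))\<^sup>2"
    using assms \<open>0 \<le> v * (2 - v)\<close> by (simp add: power_mono_iff)
  also have "\<dots> \<longleftrightarrow> l\<^sup>2 \<le> ((1 - v) * sqrt (l\<^sup>2 + x\<^sup>2))\<^sup>2"
    using \<open>0 \<le> v * (2 - v)\<close>
    by (simp add: power_mult_distrib algebra_simps power2_eq_square)
  also have "\<dots> \<longleftrightarrow> l \<le> (1 - v) * sqrt (l\<^sup>2 + x\<^sup>2)"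
    using assms by (simp add: power_mono_iff)
  also have "\<dots> \<longleftrightarrow> l / sqrt (l\<^sup>2 + x\<^sup>2) \<le> 1 - v"
    using \<open>0 < sqrt (l\<^sup>2 + x\<^sup>2)\<close> by (simp add: divide_le_eq ac_simps)
  also have "\<dots> \<longleftrightarrow> v \<le> 1 - l / sqrt (l\<^sup>2 + x\<^sup>2)"
    by linarith
  finally show ?thesis .
qed

lemma ECR_quantile_powr:
  assumes "l > 0" "0 < v" "v < 1"
  shows "ECR_quantile l v powr r
           = (l * sqrt 2) powr r * v powr (r / 2) * (1 - v) powr (- r) * (1 - v / 2) powr (r / 2)"
proof -
  have "ECR_quantile l v = (l * sqrt 2) * sqrt v * sqrt (1 - v / 2) / (1 - v)"
    using assms by (simp add: ECR_quantile_def real_sqrt_mult[symmetric] algebra_simps)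
  with assms show ?thesis
    by (simp add: powr_mult powr_divide powr_minus_divide powr_half_sqrt[symmetric] powr_powr)
qed

definition power_distribution :: "real \<Rightarrow> real measure" where
  "power_distribution \<beta> = density lborel (\<lambda>v. ennreal (indicator {0<..<1} v * (\<beta> * v powr (\<beta> - 1))))"

lemma sets_power_distribution [measurable_cong, simp]: "sets (power_distribution \<beta>) = sets borel"
  by (simp add: power_distribution_def)

lemma space_power_distribution [simp]: "space (power_distribution \<beta>) = UNIV"
  by (simp add: power_distribution_def)

lemma emeasure_power_distribution:
  assumes "A \<in> sets borel"
  shows "emeasure (power_distribution \<beta>) A
           = (\<integral>\<^sup>+v. ennreal (\<beta> * v powr (\<beta> - 1)) * indicator (A \<inter> {0<..<1}) v \<partial>lborel)"
  unfolding power_distribution_def using assms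
  by (subst emeasure_density) (auto intro!: nn_integral_cong simp: indicator_def)

lemma emeasure_power_distribution_cong:
  assumes "A \<in> sets borel" "B \<in> sets borel" "A \<inter> {0<..<1} = B \<inter> {0<..<1}"
  shows "emeasure (power_distribution \<beta>) A = emeasure (power_distribution \<beta>) B"
  using assms by (simp add: emeasure_power_distribution)

lemma emeasure_power_distribution_Ioc:
  assumes "\<beta> > 0" "0 \<le> c" "c \<le> 1"
  shows "emeasure (power_distribution \<beta>) {0<..c} = c powr \<beta>"
proof -
  have "AE v in lborel. v \<noteq> 0 \<and> v \<noteq> 1"
    using AE_lborel_singleton[of 0] AE_lborel_singleton[of 1] by eventually_elim auto
  have "emeasure (power_distribution \<beta>) {0<..c}
      = (\<integral>\<^sup>+v. ennreal (\<beta> * v powr (\<beta> - 1)) * indicator ({0<..c} \<inter> {0<..<1}) v \<partial>lborel)"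
    by (rule emeasure_power_distribution) simp
  also have "\<dots> = (\<integral>\<^sup>+v. ennreal (\<beta> * v powr (\<beta> - 1)) * indicator {0..c} v \<partial>lborel)"
    using \<open>AE v in lborel. v \<noteq> 0 \<and> v \<noteq> 1\<close>
    by (intro nn_integral_cong_AE, eventually_elim) (use \<open>c \<le> 1\<close> in \<open>auto simp: indicator_def\<close>)
  also have "\<dots> = c powr \<beta>"
  proof -
    have "((\<lambda>v. \<beta> * v powr (\<beta> - 1)) has_integral \<beta> * (c powr \<beta> / \<beta>)) {0..c}"
      using has_integral_powr_from_0[of "\<beta> - 1" c] assms by (intro has_integral_mult_right) simp
    with assms show ?thesis
      by (subst nn_integral_has_integral_lebesgue') simp_all
  qed
  finally show ?thesis .
qed

lemma prob_space_power_distribution: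
  assumes "\<beta> > 0"
  shows "prob_space (power_distribution \<beta>)"
proof
  have "emeasure (power_distribution \<beta>) UNIV = emeasure (power_distribution \<beta>) {0<..1}"
    by (rule emeasure_power_distribution_cong) auto
  then show "emeasure (power_distribution \<beta>) (space (power_distribution \<beta>)) = 1"
    using emeasure_power_distribution_Ioc[OF assms, of 1] by simp
qed

lemma cdf_distr_ECR_quantile:
  assumes "\<beta> > 0" "l > 0"
  shows "cdf (distr (power_distribution \<beta>) borel (ECR_quantile l)) x = ECR_cdf \<beta> l x"
proof -
  let ?N = "power_distribution \<beta>" and ?A = "ECR_quantile l -` {..x}"
  have "?A \<in> sets borel"
    by (rule measurable_sets_borel[OF borel_measurable_ECR_quantile]) simp
  have "cdf (distr ?N borel (ECR_quantile l)) x = measure ?N ?A"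
    unfolding cdf_def by (subst measure_distr) auto
  also have "\<dots> = ECR_cdf \<beta> l x"
  proof (cases "x > 0")
    case True
    define c where "c = 1 - l / sqrt (l\<^sup>2 + x\<^sup>2)"
    have "l < sqrt (l\<^sup>2 + x\<^sup>2)"
      using True \<open>l > 0\<close> by (intro real_less_rsqrt) (simp add: power2_eq_square)
    moreover from this have "0 < sqrt (l\<^sup>2 + x\<^sup>2)"
      using \<open>l > 0\<close> by linarith
    ultimately have "0 < c" "c < 1"
      using \<open>l > 0\<close> by (simp_all add: c_def divide_less_eq)
    have "?A \<inter> {0<..<1} = {0<..c} \<inter> {0<..<1}"
      using ECR_quantile_le_iff[OF \<open>l > 0\<close> _ _ True] by (auto simp: c_def)
    then have "measure ?N ?A = measure ?N {0<..c}"
      unfolding measure_def using \<open>?A \<in> sets borel\<close>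
      by (subst emeasure_power_distribution_cong) auto
    also have "\<dots> = c powr \<beta>"
      using emeasure_power_distribution_Ioc[OF \<open>\<beta> > 0\<close>] \<open>0 < c\<close> \<open>c < 1\<close>
      by (simp add: measure_def)
    finally show ?thesis
      using True by (simp add: ECR_cdf_def c_def)
  next
    case False
    have "?A \<inter> {0<..<1} = {} \<inter> {0<..<1}"
      using ECR_quantile_pos[OF \<open>l > 0\<close>] False by force
    then have "measure ?N ?A = measure ?N {}"
      unfolding measure_def using \<open>?A \<in> sets borel\<close>
      by (subst emeasure_power_distribution_cong) auto
    with False show ?thesis
      by (simp add: ECR_cdf_def)
  qed
  finally show ?thesis .
qed

lemma ECR_quantile_moment:
  assumes "\<beta> > 0" "l > 0" "- 2 * \<beta> < r" "r < 1"
  shows "integrable (power_distribution \<beta>) (\<lambda>v. ECR_quantile l v powr r)"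
    and "(\<integral>v. ECR_quantile l v powr r \<partial>power_distribution \<beta>)
           = \<beta> * (l * sqrt 2) powr r * Beta (1 - r) (r / 2 + \<beta>)
               * hyp2F1 (- r / 2) (r / 2 + \<beta>) (1 - r / 2 + \<beta>) (1 / 2)"
proof -
  define d where "d v = indicator {0<..<1} v * (\<beta> * v powr (\<beta> - 1))" for v :: real
  define g where "g = (\<lambda>v. v powr (r / 2 + \<beta> - 1) * (1 - v) powr (- r) * (1 - v / 2) powr (r / 2))"
  have N: "power_distribution \<beta> = density lborel d"
    by (simp add: power_distribution_def d_def)
  have "d v \<ge> 0" for v
    using \<open>\<beta> > 0\<close> by (simp add: d_def)
  have density_g: "d v * ECR_quantile l v powr r
                     = \<beta> * (l * sqrt 2) powr r * (indicator {0..1} v * g v)" for v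
  proof (cases "0 < v \<and> v < 1")
    case True
    then have "v powr (\<beta> - 1) * v powr (r / 2) = v powr (r / 2 + \<beta> - 1)"
      by (simp add: powr_add[symmetric] algebra_simps)
    with True show ?thesis
      by (simp add: d_def g_def ECR_quantile_powr[OF \<open>l > 0\<close>] mult_ac)
  qed (auto simp: d_def g_def indicator_def)
  note Euler = hyp2F1_Euler_integral[of "r / 2 + \<beta>" "1 - r / 2 + \<beta>" "1 / 2" "- r / 2"]
  have "set_integrable lborel {0..1} g"
    and "(LINT v:{0..1}|lborel. g v) = Beta (r / 2 + \<beta>) (1 - r) * hyp2F1 (- r / 2) (r / 2 + \<beta>) (1 - r / 2 + \<beta>) (1 / 2)"
    using Euler assms by (simp_all add: g_def algebra_simps)
  moreover have "integrable (density lborel d) (\<lambda>v. ECR_quantile l v powr r)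
      \<longleftrightarrow> integrable lborel (\<lambda>v. d v * ECR_quantile l v powr r)"
    and "(\<integral>v. ECR_quantile l v powr r \<partial>density lborel d)
      = (\<integral>v. d v * ECR_quantile l v powr r \<partial>lborel)"
    using \<open>\<And>v. d v \<ge> 0\<close> by (simp_all add: d_def integrable_density integral_density)
  ultimately show "integrable (power_distribution \<beta>) (\<lambda>v. ECR_quantile l v powr r)"
    and "(\<integral>v. ECR_quantile l v powr r \<partial>power_distribution \<beta>)
           = \<beta> * (l * sqrt 2) powr r * Beta (1 - r) (r / 2 + \<beta>)
               * hyp2F1 (- r / 2) (r / 2 + \<beta>) (1 - r / 2 + \<beta>) (1 / 2)"
    unfolding N density_g
    by (simp_all add: set_integrable_def set_lebesgue_integral_def Beta_commute[of "1 - r"])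
qed

theorem corollary3:
  fixes M :: "'a measure" and X :: "'a \<Rightarrow> real" and \<beta> l r :: real
  assumes "prob_space M"
    and "X \<in> borel_measurable M"
    and "\<beta> > 0" and "l > 0"
    and "\<And>x. cdf (distr M borel X) x = ECR_cdf \<beta> l x"
    and "-2 * \<beta> < r" and "r < 1"
  shows "integrable M (\<lambda>\<omega>. X \<omega> powr r)
    \<and> (\<integral>\<omega>. X \<omega> powr r \<partial>M) =
        \<beta> * (l * sqrt 2) powr r * Beta (1 - r) (r / 2 + \<beta>)
          * hyp2F1 (- r / 2) (r / 2 + \<beta>) (1 - r / 2 + \<beta>) (1 / 2)"
proof -
  let ?N = "power_distribution \<beta>" and ?q = "ECR_quantile l"
  have X_distr: "distr M borel X = distr ?N borel ?q"
  proof (rule cdf_unique)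
    show "real_distribution (distr M borel X)"
      using assms(1,2) by (simp add: prob_space.real_distribution_distr)
    show "real_distribution (distr ?N borel ?q)"
      using prob_space_power_distribution[OF \<open>\<beta> > 0\<close>]
      by (simp add: prob_space.real_distribution_distr)
    show "cdf (distr M borel X) = cdf (distr ?N borel ?q)"
      using assms(5) cdf_distr_ECR_quantile[OF \<open>\<beta> > 0\<close> \<open>l > 0\<close>] by auto
  qed
  have "integrable M (\<lambda>\<omega>. X \<omega> powr r) \<longleftrightarrow> integrable ?N (\<lambda>v. ?q v powr r)"
    using integrable_distr_eq[of X M borel "\<lambda>x. x powr r"]
      integrable_distr_eq[of ?q ?N borel "\<lambda>x. x powr r"] assms(2)
    by (simp add: X_distr)
  moreover have "(\<integral>\<omega>. X \<omega> powr r \<partial>M) = (\<integral>v. ?q v powr r \<partial>?N)"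
    using integral_distr[of X M borel "\<lambda>x. x powr r"]
      integral_distr[of ?q ?N borel "\<lambda>x. x powr r"] assms(2)
    by (simp add: X_distr)
  ultimately show ?thesis
    using ECR_quantile_moment[OF assms(3,4,6,7)] by simp
qed

end
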